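(* Let $\pi_i:(X_i,T_i)\to(Y_i,S_i)$, $i=1,2$, be factor maps between topological dynamical systems. If both $\pi_1$ and $\pi_2$ are proximal, then the product map $\pi_1\times\pi_2:(X_1\times X_2,T_1\times T_2)\to(Y_1\times Y_2,S_1\times S_2)$ is proximal.
   Context: Systems: compact metric space with continuous surjection; factor map: continuous surjection intertwining the maps. A pair $x,y$ is proximal if $\liminf_{n\to\infty}\varrho(T^nx,T^ny)=0$. A factor map $\pi$ is proximal if every pair $x_1,x_2$ with $\pi(x_1)=\pi(x_2)$ is proximal. *)

theory Defs
  imports "HOL-Analysis.Analysis"
begin

definition tds :: "'a::metric_space set \<Rightarrow> ('a \<Rightarrow> 'a) \<Rightarrow> bool" where
  "tds X T \<longleftrightarrow> compact X \<and> continuous_on X T \<and> T ` X = X"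

definition factor_map ::
  "'a::metric_space set \<Rightarrow> ('a \<Rightarrow> 'a) \<Rightarrow> 'b::metric_space set \<Rightarrow> ('b \<Rightarrow> 'b) \<Rightarrow> ('a \<Rightarrow> 'b) \<Rightarrow> bool" where
  "factor_map X T Y S \<pi> \<longleftrightarrow> tds X T \<and> tds Y S \<and> continuous_on X \<pi> \<and> \<pi> ` X = Y \<and>
     (\<forall>x\<in>X. \<pi> (T x) = S (\<pi> x))"

definition proximal_pair :: "('a::metric_space \<Rightarrow> 'a) \<Rightarrow> 'a \<Rightarrow> 'a \<Rightarrow> bool" where
  "proximal_pair T x y \<longleftrightarrow> liminf (\<lambda>n. ereal (dist ((T ^^ n) x) ((T ^^ n) y))) = 0"

definition proximal_factor ::
  "'a::metric_space set \<Rightarrow> ('a \<Rightarrow> 'a) \<Rightarrow> ('a \<Rightarrow> 'b) \<Rightarrow> bool" where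
  "proximal_factor X T \<pi> \<longleftrightarrow>
     (\<forall>x1\<in>X. \<forall>x2\<in>X. \<pi> x1 = \<pi> x2 \<longrightarrow> proximal_pair T x1 x2)"

definition prod_map :: "('a \<Rightarrow> 'c) \<Rightarrow> ('b \<Rightarrow> 'd) \<Rightarrow> 'a \<times> 'b \<Rightarrow> 'c \<times> 'd" where
  "prod_map f g = (\<lambda>(x, y). (f x, g y))"

end

theory Submission
  imports Defs
begin

text \<open>Let x1, y1 be a proximal pair for T1 and x2, y2 a pair in a common fibre of \<pi>2. Along
  times k_j at which the T1-orbits of x1 and y1 come closer and closer, compactness yields a
  subsequence on which the T2-orbits of x2 and y2 converge to a pair z2, z2'. Fibres are closed
  and invariant, so z2, z2' again lie in a common fibre and are therefore proximal: the m-th iterates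
  of z2 and z2' are close for some m. Continuity of T2^m and uniform continuity of T1^m on the
  compact space X1 make both coordinates close at the times m + k_j for all large j.\<close>

lemma frequently_less_imp_Liminf_le:
  fixes f :: "'a \<Rightarrow> 'b::complete_linorder"
  assumes "\<exists>\<^sub>F x in F. f x < c"
  shows "Liminf F f \<le> c"
proof (rule ccontr)
  assume "\<not> Liminf F f \<le> c"
  then have "c < Liminf F f"
    by (simp add: not_le)
  then have "\<forall>\<^sub>F x in F. c < f x"
    using le_Liminf_iff[of "Liminf F f" F f, THEN iffD1, OF order_refl] by blast
  with assms have "\<exists>\<^sub>F x in F. c < f x \<and> f x < c"
    by (rule frequently_eventually_conj)
  then show False
    by (auto dest: frequently_ex)
qed

lemma Liminf_less_imp_frequently:
  fixes f :: "'a \<Rightarrow> 'b::complete_linorder"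
  assumes "Liminf F f < c"
  shows "\<exists>\<^sub>F x in F. f x < c"
proof -
  have "\<not> c \<le> Liminf F f"
    using assms by (simp add: not_le)
  then obtain y where "y < c" "\<not> (\<forall>\<^sub>F x in F. y < f x)"
    unfolding le_Liminf_iff by blast
  then have "\<exists>\<^sub>F x in F. f x \<le> y"
    by (simp add: not_eventually not_less)
  then show ?thesis
    by (rule frequently_elim1) (use \<open>y < c\<close> in auto)
qed

lemma proximal_pair_iff_frequently:
  "proximal_pair T x y \<longleftrightarrow> (\<forall>e>0. \<exists>\<^sub>F n in sequentially. dist ((T^^n) x) ((T^^n) y) < e)"
proof -
  let ?L = "liminf (\<lambda>n. ereal (dist ((T^^n) x) ((T^^n) y)))"
  have "0 \<le> ?L"
    by (intro Liminf_bounded) auto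
  then have "proximal_pair T x y \<longleftrightarrow> (\<forall>e>0. ?L < ereal e)"
    unfolding proximal_pair_def using ereal_dense2 less_eq_ereal_def by force
  also have "\<dots> \<longleftrightarrow> (\<forall>e>0. \<exists>\<^sub>F n in sequentially. dist ((T^^n) x) ((T^^n) y) < e)"
  proof (intro iffI allI impI)
    fix e :: real
    assume "\<forall>e>0. ?L < ereal e" and "0 < e"
    then have "?L < ereal e"
      by simp
    then have "\<exists>\<^sub>F n in sequentially. ereal (dist ((T^^n) x) ((T^^n) y)) < ereal e"
      by (rule Liminf_less_imp_frequently)
    then show "\<exists>\<^sub>F n in sequentially. dist ((T^^n) x) ((T^^n) y) < e"
      by simp
  next
    fix e :: real
    assume "\<forall>e>0. \<exists>\<^sub>F n in sequentially. dist ((T^^n) x) ((T^^n) y) < e" and "0 < e"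
    then have "\<exists>\<^sub>F n in sequentially. dist ((T^^n) x) ((T^^n) y) < e / 2"
      by (meson half_gt_zero)
    then have "?L \<le> ereal (e / 2)"
      by (intro frequently_less_imp_Liminf_le) simp
    also have "\<dots> < ereal e"
      using \<open>0 < e\<close> by simp
    finally show "?L < ereal e" .
  qed
  finally show ?thesis .
qed

lemma proximal_pairE:
  assumes "proximal_pair T x y"
  obtains k where "filterlim k sequentially sequentially"
    and "(\<lambda>j. dist ((T^^k j) x) ((T^^k j) y)) \<longlonglongrightarrow> 0"
proof -
  have "\<exists>n\<ge>j. dist ((T^^n) x) ((T^^n) y) < inverse (real (Suc j))" for j
    using assms[unfolded proximal_pair_iff_frequently, rule_format, of "inverse (real (Suc j))"]
    by (simp add: frequently_sequentially)
  then obtain k where k: "\<And>j. k j \<ge> j"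
    "\<And>j. dist ((T^^k j) x) ((T^^k j) y) < inverse (real (Suc j))"
    by metis
  have "filterlim k sequentially sequentially"
    using k(1) by (intro filterlim_at_top_mono[OF filterlim_ident]) auto
  moreover have "dist ((T^^k j) x) ((T^^k j) y) \<le> inverse (real (Suc j))" for j
    using k(2)[of j] by linarith
  then have "(\<lambda>j. dist ((T^^k j) x) ((T^^k j) y)) \<longlonglongrightarrow> 0"
    by (intro tendsto_sandwich[OF _ _ tendsto_const LIMSEQ_inverse_real_of_nat] always_eventually allI)
      simp_all
  ultimately show thesis
    using that by blast
qed

lemma frequently_sequentially_if_eventually_along:
  assumes "filterlim k sequentially sequentially" and "\<forall>\<^sub>F j in sequentially. P (k j)"
  shows "\<exists>\<^sub>F n in sequentially. P n"
  unfolding frequently_sequentially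
proof
  fix N
  have "\<forall>\<^sub>F j in sequentially. N \<le> k j"
    using assms(1) unfolding filterlim_at_top by blast
  then have "\<forall>\<^sub>F j in sequentially. N \<le> k j \<and> P (k j)"
    using assms(2) by (rule eventually_conj)
  then obtain j where "N \<le> k j" "P (k j)"
    using eventually_happens'[OF sequentially_bot] by blast
  then show "\<exists>n\<ge>N. P n"
    by blast
qed

lemma tds_funpow_mem: "tds X T \<Longrightarrow> x \<in> X \<Longrightarrow> (T^^n) x \<in> X"
  by (induction n) (auto simp: tds_def)

lemma tds_continuous_on_funpow:
  assumes "tds X T"
  shows "continuous_on X (T^^n)"
proof (induction n)
  case 0
  then show ?case by simp
next
  case (Suc n)
  have "(T^^n) ` X \<subseteq> X"
    using tds_funpow_mem[OF assms] by blast
  then have "continuous_on ((T^^n) ` X) T"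
    using assms by (meson continuous_on_subset tds_def)
  then have "continuous_on X (T \<circ> T^^n)"
    by (rule continuous_on_compose[OF Suc])
  then show ?case by simp
qed

lemma tds_uniformly_continuous_on_funpow: "tds X T \<Longrightarrow> uniformly_continuous_on X (T^^n)"
  by (intro compact_uniformly_continuous tds_continuous_on_funpow) (auto simp: tds_def)

lemma factor_map_funpow:
  assumes "factor_map X T Y S p" and "x \<in> X"
  shows "p ((T^^n) x) = (S^^n) (p x)"
proof (induction n)
  case 0
  then show ?case by simp
next
  case (Suc n)
  have "(T^^n) x \<in> X"
    using assms by (auto simp: factor_map_def intro: tds_funpow_mem)
  with Suc assms(1) show ?case
    by (simp add: factor_map_def)
qed

lemma factor_map_fibre_limit:
  assumes fm: "factor_map X T Y S p" and "x \<in> X" "y \<in> X" "p x = p y"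
    and lim_x: "(\<lambda>j. (T^^k j) x) \<longlonglongrightarrow> z" and lim_y: "(\<lambda>j. (T^^k j) y) \<longlonglongrightarrow> z'"
    and "z \<in> X" "z' \<in> X"
  shows "p z = p z'"
proof -
  have cont: "continuous_on X p" and tds: "tds X T"
    using fm by (auto simp: factor_map_def)
  have "(\<lambda>j. p ((T^^k j) x)) \<longlonglongrightarrow> p z"
    using tds_funpow_mem[OF tds \<open>x \<in> X\<close>] \<open>z \<in> X\<close>
    by (intro continuous_on_tendsto_compose[OF cont lim_x]) auto
  moreover have "(\<lambda>j. p ((T^^k j) y)) \<longlonglongrightarrow> p z'"
    using tds_funpow_mem[OF tds \<open>y \<in> X\<close>] \<open>z' \<in> X\<close>
    by (intro continuous_on_tendsto_compose[OF cont lim_y]) auto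
  moreover have "p ((T^^k j) x) = p ((T^^k j) y)" for j
    using factor_map_funpow[OF fm] assms(2-4) by simp
  ultimately show ?thesis
    using LIMSEQ_unique by fastforce
qed

lemma factor_map_fibre_pair_convergent_subseq:
  fixes r :: "nat \<Rightarrow> nat"
  assumes fm: "factor_map X T Y S p" and "x \<in> X" "y \<in> X" and fibre: "p x = p y"
  obtains s z z' where "strict_mono (s :: nat \<Rightarrow> nat)" and "z \<in> X" "z' \<in> X" and "p z = p z'"
    and "(\<lambda>j. (T^^r (s j)) x) \<longlonglongrightarrow> z" and "(\<lambda>j. (T^^r (s j)) y) \<longlonglongrightarrow> z'"
proof -
  have tds: "tds X T"
    using fm by (simp add: factor_map_def)
  have "seq_compact (X \<times> X)"
    using tds by (auto simp: tds_def intro: compact_imp_seq_compact compact_Times)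
  moreover have "\<forall>j. ((T^^r j) x, (T^^r j) y) \<in> X \<times> X"
    using tds \<open>x \<in> X\<close> \<open>y \<in> X\<close> by (auto intro: tds_funpow_mem)
  ultimately obtain l s where l: "l \<in> X \<times> X" and s: "strict_mono s"
    and lim: "((\<lambda>j. ((T^^r j) x, (T^^r j) y)) \<circ> s) \<longlonglongrightarrow> l"
    by (rule seq_compactE)
  obtain z z' where l_eq: "l = (z, z')" and z: "z \<in> X" "z' \<in> X"
    using l by blast
  have lim_x: "(\<lambda>j. (T^^r (s j)) x) \<longlonglongrightarrow> z" and lim_y: "(\<lambda>j. (T^^r (s j)) y) \<longlonglongrightarrow> z'"
    using tendsto_fst[OF lim] tendsto_snd[OF lim] by (simp_all add: l_eq o_def)
  have "p z = p z'"
    by (rule factor_map_fibre_limit[OF fm \<open>x \<in> X\<close> \<open>y \<in> X\<close> fibre lim_x lim_y z])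
  with s z lim_x lim_y show thesis
    using that by blast
qed

lemma funpow_prod_map:
  fixes f :: "'a \<Rightarrow> 'a" and g :: "'b \<Rightarrow> 'b"
  shows "(prod_map f g ^^ n) (x, y) = ((f^^n) x, (g^^n) y)"
  by (induction n arbitrary: x y) (simp_all add: prod_map_def)

lemma proximal_pair_prod_mapI:
  assumes "\<And>e. e > 0 \<Longrightarrow>
    \<exists>\<^sub>F n in sequentially. dist ((T1^^n) x1) ((T1^^n) y1) < e \<and> dist ((T2^^n) x2) ((T2^^n) y2) < e"
  shows "proximal_pair (prod_map T1 T2) (x1, x2) (y1, y2)"
  unfolding proximal_pair_iff_frequently funpow_prod_map dist_Pair_Pair
proof (intro allI impI)
  fix e :: real
  assume "e > 0"
  then have "\<exists>\<^sub>F n in sequentially.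
      dist ((T1^^n) x1) ((T1^^n) y1) < e / 2 \<and> dist ((T2^^n) x2) ((T2^^n) y2) < e / 2"
    by (intro assms) simp
  then show "\<exists>\<^sub>F n in sequentially.
      sqrt ((dist ((T1^^n) x1) ((T1^^n) y1))\<^sup>2 + (dist ((T2^^n) x2) ((T2^^n) y2))\<^sup>2) < e"
    by (rule frequently_elim1) (auto intro: sqrt_sum_squares_half_less)
qed

lemma proximal_pair_prod_map:
  assumes tds1: "tds X1 T1" and "x1 \<in> X1" "y1 \<in> X1" and prox1: "proximal_pair T1 x1 y1"
    and fm2: "factor_map X2 T2 Y2 S2 p2" and pf2: "proximal_factor X2 T2 p2"
    and "x2 \<in> X2" "y2 \<in> X2" and fibre: "p2 x2 = p2 y2"
  shows "proximal_pair (prod_map T1 T2) (x1, x2) (y1, y2)"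
proof (rule proximal_pair_prod_mapI)
  fix e :: real
  assume "e > 0"
  have tds2: "tds X2 T2"
    using fm2 by (simp add: factor_map_def)
  obtain r where r_lim: "filterlim r sequentially sequentially"
    and r_close: "(\<lambda>j. dist ((T1^^r j) x1) ((T1^^r j) y1)) \<longlonglongrightarrow> 0"
    using proximal_pairE[OF prox1] by blast
  obtain s z2 z2' where s: "strict_mono s" and z: "z2 \<in> X2" "z2' \<in> X2" and "p2 z2 = p2 z2'"
    and lim_rx: "(\<lambda>j. (T2^^r (s j)) x2) \<longlonglongrightarrow> z2" and lim_ry: "(\<lambda>j. (T2^^r (s j)) y2) \<longlonglongrightarrow> z2'"
    by (rule factor_map_fibre_pair_convergent_subseq[OF fm2 \<open>x2 \<in> X2\<close> \<open>y2 \<in> X2\<close> fibre])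
  define k where "k = r \<circ> s"
  have lim_x: "(\<lambda>j. (T2^^k j) x2) \<longlonglongrightarrow> z2" and lim_y: "(\<lambda>j. (T2^^k j) y2) \<longlonglongrightarrow> z2'"
    using lim_rx lim_ry by (simp_all add: k_def)
  from \<open>p2 z2 = p2 z2'\<close> have "proximal_pair T2 z2 z2'"
    using pf2 z by (simp add: proximal_factor_def)
  then obtain m where m: "dist ((T2^^m) z2) ((T2^^m) z2') < e"
    using \<open>e > 0\<close> unfolding proximal_pair_iff_frequently by (blast dest: frequently_ex)
  have "(\<lambda>j. dist ((T2^^m) ((T2^^k j) x2)) ((T2^^m) ((T2^^k j) y2))) \<longlonglongrightarrow> dist ((T2^^m) z2) ((T2^^m) z2')"
    using tds_funpow_mem[OF tds2] \<open>x2 \<in> X2\<close> \<open>y2 \<in> X2\<close> z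
    by (intro tendsto_dist continuous_on_tendsto_compose[OF tds_continuous_on_funpow[OF tds2]] lim_x lim_y)
      auto
  then have close2: "\<forall>\<^sub>F j in sequentially. dist ((T2^^(m + k j)) x2) ((T2^^(m + k j)) y2) < e"
    using m by (simp add: funpow_add order_tendstoD(2))
  have "\<forall>j. (T1^^k j) x1 \<in> X1" and "\<forall>j. (T1^^k j) y1 \<in> X1"
    using tds1 \<open>x1 \<in> X1\<close> \<open>y1 \<in> X1\<close> by (auto intro: tds_funpow_mem)
  moreover have "(\<lambda>j. dist ((T1^^k j) x1) ((T1^^k j) y1)) \<longlonglongrightarrow> 0"
    using LIMSEQ_subseq_LIMSEQ[OF r_close s] by (simp add: k_def o_def)
  ultimately have "(\<lambda>j. dist ((T1^^m) ((T1^^k j) x1)) ((T1^^m) ((T1^^k j) y1))) \<longlonglongrightarrow> 0"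
    using tds_uniformly_continuous_on_funpow[OF tds1, of m, unfolded uniformly_continuous_on_sequentially,
        rule_format, of "\<lambda>j. (T1^^k j) x1" "\<lambda>j. (T1^^k j) y1"]
    by blast
  then have close1: "\<forall>\<^sub>F j in sequentially. dist ((T1^^(m + k j)) x1) ((T1^^(m + k j)) y1) < e"
    using \<open>e > 0\<close> by (simp add: funpow_add order_tendstoD(2))
  have "filterlim k sequentially sequentially"
    unfolding k_def comp_def by (rule filterlim_compose[OF r_lim filterlim_subseq[OF s]])
  then have "filterlim (\<lambda>j. m + k j) sequentially sequentially"
    by (rule filterlim_at_top_mono) simp
  then show "\<exists>\<^sub>F n in sequentially. dist ((T1^^n) x1) ((T1^^n) y1) < e \<and> dist ((T2^^n) x2) ((T2^^n) y2) < e"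
    by (rule frequently_sequentially_if_eventually_along) (rule eventually_conj[OF close1 close2])
qed

lemma prod_map_image: "prod_map f g ` (A \<times> B) = f ` A \<times> g ` B"
  by (auto simp: prod_map_def image_iff)

lemma continuous_on_prod_map:
  assumes "continuous_on A f" "continuous_on B g"
  shows "continuous_on (A \<times> B) (prod_map f g)"
  unfolding prod_map_def case_prod_beta
  by (intro continuous_on_Pair continuous_on_compose2[OF assms(1) continuous_on_fst]
      continuous_on_compose2[OF assms(2) continuous_on_snd]) auto

lemma tds_prod_map: "tds X1 T1 \<Longrightarrow> tds X2 T2 \<Longrightarrow> tds (X1 \<times> X2) (prod_map T1 T2)"
  unfolding tds_def by (auto intro!: compact_Times continuous_on_prod_map simp: prod_map_image)

lemma factor_map_prod_map:
  "factor_map X1 T1 Y1 S1 p1 \<Longrightarrow> factor_map X2 T2 Y2 S2 p2 \<Longrightarrow>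
    factor_map (X1 \<times> X2) (prod_map T1 T2) (Y1 \<times> Y2) (prod_map S1 S2) (prod_map p1 p2)"
  unfolding factor_map_def
  by (auto intro!: tds_prod_map continuous_on_prod_map simp: prod_map_image) (auto simp: prod_map_def)

lemma proximal_factor_prod_map:
  assumes "tds X1 T1" and "proximal_factor X1 T1 p1"
    and "factor_map X2 T2 Y2 S2 p2" and "proximal_factor X2 T2 p2"
  shows "proximal_factor (X1 \<times> X2) (prod_map T1 T2) (prod_map p1 p2)"
  unfolding proximal_factor_def
proof (clarify)
  fix x1 x2 y1 y2
  assume "x1 \<in> X1" "x2 \<in> X2" "y1 \<in> X1" "y2 \<in> X2"
    and "prod_map p1 p2 (x1, x2) = prod_map p1 p2 (y1, y2)"
  then have "proximal_pair T1 x1 y1" "p2 x2 = p2 y2"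
    using assms(2) by (auto simp: proximal_factor_def prod_map_def)
  then show "proximal_pair (prod_map T1 T2) (x1, x2) (y1, y2)"
    using proximal_pair_prod_map[OF assms(1) _ _ _ assms(3,4)] \<open>x1 \<in> X1\<close> \<open>x2 \<in> X2\<close>
      \<open>y1 \<in> X1\<close> \<open>y2 \<in> X2\<close> by blast
qed

theorem lemma4p3:
  fixes X1 :: "'a::metric_space set" and T1 :: "'a \<Rightarrow> 'a"
    and Y1 :: "'b::metric_space set" and S1 :: "'b \<Rightarrow> 'b" and \<pi>1 :: "'a \<Rightarrow> 'b"
    and X2 :: "'c::metric_space set" and T2 :: "'c \<Rightarrow> 'c"
    and Y2 :: "'d::metric_space set" and S2 :: "'d \<Rightarrow> 'd" and \<pi>2 :: "'c \<Rightarrow> 'd"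
  assumes "factor_map X1 T1 Y1 S1 \<pi>1"
    and "factor_map X2 T2 Y2 S2 \<pi>2"
    and "proximal_factor X1 T1 \<pi>1"
    and "proximal_factor X2 T2 \<pi>2"
  shows "factor_map (X1 \<times> X2) (prod_map T1 T2) (Y1 \<times> Y2) (prod_map S1 S2) (prod_map \<pi>1 \<pi>2)
     \<and> proximal_factor (X1 \<times> X2) (prod_map T1 T2) (prod_map \<pi>1 \<pi>2)"
proof
  show "factor_map (X1 \<times> X2) (prod_map T1 T2) (Y1 \<times> Y2) (prod_map S1 S2) (prod_map \<pi>1 \<pi>2)"
    using assms(1,2) by (rule factor_map_prod_map)
  have "tds X1 T1"
    using assms(1) by (simp add: factor_map_def)
  then show "proximal_factor (X1 \<times> X2) (prod_map T1 T2) (prod_map \<pi>1 \<pi>2)"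
    using assms(3,2,4) by (rule proximal_factor_prod_map)
qed

end
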